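(* For all integers $n\ge 1$ and $k\ge 0$, the number of Dyck $n$-paths having exactly $n-2k$ ascents of odd length equals \[\frac{1}{n+1}\binom{n+1}{2k+1}\binom{n+k}{k}.\]
   Context: A Dyck $n$-path is a path from $(0,0)$ to $(2n,0)$ with $n$ upsteps $U=(1,1)$ and $n$ downsteps $D=(1,-1)$ never going below the $x$-axis. An ascent is a maximal run of consecutive upsteps; its length is its number of upsteps. *)

theory Defs
  imports Complex_Main
begin

text \<open>A lattice path is a list of steps: True = upstep U, False = downstep D.\<close>

definition height :: "bool list \<Rightarrow> int" where
  "height w = int (count_list w True) - int (count_list w False)"

definition dyck_path :: "nat \<Rightarrow> bool list \<Rightarrow> bool" where
  "dyck_path n w \<longleftrightarrow> length w = 2 * n \<and> height w = 0 \<and>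
     (\<forall>i \<le> length w. height (take i w) \<ge> 0)"

function ascents :: "bool list \<Rightarrow> nat list" where
  "ascents [] = []"
| "ascents (False # w) = ascents w"
| "ascents (True # w) =
     (length (takeWhile id w) + 1) # ascents (dropWhile id w)"
  by pat_completeness auto
termination
  by (relation "measure length") (auto simp: le_imp_less_Suc length_dropWhile_le)

definition odd_ascents :: "bool list \<Rightarrow> nat" where
  "odd_ascents w = length (filter odd (ascents w))"

end

theory Submission
  imports Defs
begin

text \<open>
  Read a path from left to right, remembering the current height and whether the run of
  upsteps just read has odd length. Let T(h, u, j) count the paths from height h down to 0
  that stay weakly above 0 and have u upsteps and j odd ascents, and let T'(h, u, j) count
  the same paths when they start inside a run of odd length. Splitting off the first step
  gives
    T(h, u, j) = T'(h + 1, u - 1, j) + T(h - 1, u, j),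
    T'(h, u, j) = T(h + 1, u - 1, j) + T(h - 1, u, j - 1).
  The first equation expresses T' through T, so it suffices to check that the closed form
    T(h, j + 2q, j) = (h + 1) (h + j + 3q)! / (j! q! (h + 2q + 1)!)
  (and T = 0 when u - j is odd or negative) satisfies the second one. After clearing
  denominators this is the polynomial identity
    (h + 1)(h + j + 3q) - h (h + 2q + 1) = (h + 1) j + (h + 3) q.
  The theorem is the case h = 0, u = n, j = n - 2k.
\<close>

fun dyck_tail :: "nat \<Rightarrow> bool list \<Rightarrow> bool" where
  "dyck_tail h [] \<longleftrightarrow> h = 0"
| "dyck_tail h (True # w) \<longleftrightarrow> dyck_tail (Suc h) w"
| "dyck_tail h (False # w) \<longleftrightarrow> 0 < h \<and> dyck_tail (h - 1) w"

lemma height_simps [simp]: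
  "height [] = 0" "height (True # w) = height w + 1" "height (False # w) = height w - 1"
  by (auto simp: height_def)

lemma dyck_tail_iff_height:
  "dyck_tail h w \<longleftrightarrow>
     int h + height w = 0 \<and> (\<forall>i \<le> length w. 0 \<le> int h + height (take i w))"
proof (induction w arbitrary: h)
  case Nil
  then show ?case by auto
next
  case (Cons x w)
  have split_prefixes:
    "(\<forall>i \<le> Suc (length w). P i) \<longleftrightarrow> P 0 \<and> (\<forall>i \<le> length w. P (Suc i))" for P
    by (metis Suc_le_mono le0 not0_implies_Suc)
  show ?case
    using Cons.IH[of "Suc h"] Cons.IH[of "h - 1"]
    by (cases x; cases h) (auto simp: split_prefixes algebra_simps)
qed

lemma dyck_path_iff_dyck_tail: "dyck_path n w \<longleftrightarrow> length w = 2 * n \<and> dyck_tail 0 w"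
  by (auto simp: dyck_path_def dyck_tail_iff_height)

lemma dyck_tail_length: "dyck_tail h w \<Longrightarrow> h \<le> length w"
  by (induction h w rule: dyck_tail.induct) auto

text \<open>The flag \<open>p\<close> records that the run of upsteps read so far has odd length.\<close>

fun odd_ascents_from :: "bool \<Rightarrow> bool list \<Rightarrow> nat" where
  "odd_ascents_from p [] = of_bool p"
| "odd_ascents_from p (True # w) = odd_ascents_from (\<not> p) w"
| "odd_ascents_from p (False # w) = of_bool p + odd_ascents_from False w"

lemma odd_ascents_from_takeWhile:
  "odd_ascents_from p w =
     of_bool (odd (length (takeWhile id w)) \<noteq> p) + odd_ascents_from False (dropWhile id w)"
  by (induction p w rule: odd_ascents_from.induct) auto

lemma odd_ascents_eq_odd_ascents_from: "odd_ascents w = odd_ascents_from False w"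
  unfolding odd_ascents_def
  by (induction w rule: ascents.induct) (auto simp: odd_ascents_from_takeWhile[of True])

definition tails :: "bool \<Rightarrow> nat \<Rightarrow> nat \<Rightarrow> nat \<Rightarrow> bool list set" where
  "tails p h L j = {w. length w = L \<and> dyck_tail h w \<and> odd_ascents_from p w = j}"

lemma finite_tails: "finite (tails p h L j)"
  unfolding tails_def by (rule finite_subset[OF _ finite_list_length[of L]]) auto

lemma tails_eq_empty: "L < h \<Longrightarrow> tails p h L j = {}"
  using dyck_tail_length by (fastforce simp: tails_def)

lemma tails_Suc:
  "tails p h (Suc L) j = Cons True ` tails (\<not> p) (Suc h) L j \<union>
     Cons False ` (if h = 0 \<or> j < of_bool p then {} else tails False (h - 1) L (j - of_bool p))"
proof (intro set_eqI)
  fix w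
  show "w \<in> tails p h (Suc L) j \<longleftrightarrow> w \<in> Cons True ` tails (\<not> p) (Suc h) L j \<union>
     Cons False ` (if h = 0 \<or> j < of_bool p then {} else tails False (h - 1) L (j - of_bool p))"
    by (cases "(h, w)" rule: dyck_tail.cases) (auto simp: tails_def)
qed

lemma card_tails_Suc:
  "card (tails p h (Suc L) j) = card (tails (\<not> p) (Suc h) L j) +
     (if h = 0 \<or> j < of_bool p then 0 else card (tails False (h - 1) L (j - of_bool p)))"
  unfolding tails_Suc
  by (subst card_Un_disjoint) (auto simp: finite_tails card_image)

definition tail_weight :: "nat \<Rightarrow> nat \<Rightarrow> nat \<Rightarrow> real" where
  "tail_weight h j q = (h + 1) * fact (h + j + 3 * q) / (fact j * fact q * fact (h + 2 * q + 1))"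

lemma tail_weight_rescale:
  assumes "D = c * (fact j * fact q * fact (h + 2 * q + 1))" and "h + j + 3 * q = m"
  shows "D * tail_weight h j q = c * (h + 1) * fact m"
  using assms by (simp add: tail_weight_def)

lemma tail_weight_rec:
  assumes "0 < j + q"
  shows "tail_weight h j q - (if h = 0 then 0 else tail_weight (h - 1) j q) =
    (if j = 0 then 0 else tail_weight h (j - 1) q) +
    (if q = 0 then 0 else tail_weight (h + 2) j (q - 1))"
proof -
  obtain m where m: "h + j + 3 * q = Suc m"
    using assms not0_implies_Suc[of "h + j + 3 * q"] by auto
  define D :: real where "D = fact j * fact q * fact (h + 2 * q + 1)"
  have "D > 0"
    unfolding D_def by simp
  have lhs1: "D * tail_weight h j q = (h + 1) * (h + j + 3 * q) * (fact m :: real)"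
    using tail_weight_rescale[of D 1 j q h "Suc m"] m unfolding D_def by (simp add: algebra_simps)
  have lhs2:
    "D * (if h = 0 then 0 else tail_weight (h - 1) j q) = h * (h + 2 * q + 1) * (fact m :: real)"
  proof (cases h)
    case (Suc h')
    then have "D * tail_weight h' j q = (h + 2 * q + 1) * real (h' + 1) * fact m"
      using m by (intro tail_weight_rescale) (simp_all add: D_def algebra_simps)
    with Suc show ?thesis
      by (simp add: algebra_simps)
  qed simp
  have rhs1: "D * (if j = 0 then 0 else tail_weight h (j - 1) q) = (h + 1) * j * (fact m :: real)"
  proof (cases j)
    case (Suc j')
    then have "D * tail_weight h j' q = j * real (h + 1) * fact m"
      using m by (intro tail_weight_rescale) (simp_all add: D_def algebra_simps)
    with Suc show ?thesis
      by (simp add: algebra_simps)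
  qed simp
  have rhs2:
    "D * (if q = 0 then 0 else tail_weight (h + 2) j (q - 1)) = (h + 3) * q * (fact m :: real)"
  proof (cases q)
    case (Suc q')
    then have "D * tail_weight (h + 2) j q' = q * real (h + 2 + 1) * fact m"
      using m by (intro tail_weight_rescale) (simp_all add: D_def algebra_simps)
    with Suc show ?thesis
      by (simp add: algebra_simps)
  qed simp
  have "D * (tail_weight h j q - (if h = 0 then 0 else tail_weight (h - 1) j q)) =
      D * ((if j = 0 then 0 else tail_weight h (j - 1) q) +
           (if q = 0 then 0 else tail_weight (h + 2) j (q - 1)))"
    unfolding right_diff_distrib distrib_left lhs1 lhs2 rhs1 rhs2
    by (simp add: algebra_simps)
  then show ?thesis
    using \<open>D > 0\<close> by simp
qed

definition tail_number :: "nat \<Rightarrow> nat \<Rightarrow> nat \<Rightarrow> real" where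
  "tail_number h u j = (if j \<le> u \<and> even (u - j) then tail_weight h j ((u - j) div 2) else 0)"

lemma tail_number_0 [simp]: "tail_number h 0 j = of_bool (j = 0)"
  by (simp add: tail_number_def tail_weight_def)

lemma tail_number_rec:
  "tail_number h (Suc u) j - (if h = 0 then 0 else tail_number (h - 1) (Suc u) j) =
    (if j = 0 then 0 else tail_number h u (j - 1)) +
    (if u = 0 then 0 else tail_number (h + 2) (u - 1) j)"
proof (cases "j \<le> Suc u \<and> even (Suc u - j)")
  case True
  then obtain q where q: "Suc u = j + 2 * q"
    by (metis evenE le_add_diff_inverse)
  have number_eq_weight: "tail_number h' (Suc u) j = tail_weight h' j q" for h'
    using q by (simp add: tail_number_def)
  have pred_j_eq_weight:
    "(if j = 0 then 0 else tail_number h u (j - 1)) = (if j = 0 then 0 else tail_weight h (j - 1) q)"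
    using q by (auto simp: tail_number_def)
  have pred_u_eq_weight: "(if u = 0 then 0 else tail_number (h + 2) (u - 1) j) =
      (if q = 0 then 0 else tail_weight (h + 2) j (q - 1))"
  proof (cases q)
    case (Suc q')
    then have "u - 1 = j + 2 * q'" "u \<noteq> 0"
      using q by simp_all
    then show ?thesis
      using Suc by (simp add: tail_number_def)
  qed (use q in \<open>auto simp: tail_number_def\<close>)
  have "0 < j + q"
    using q by presburger
  then show ?thesis
    unfolding number_eq_weight pred_j_eq_weight pred_u_eq_weight by (rule tail_weight_rec)
next
  case False
  then show ?thesis
    by (auto simp: tail_number_def)
qed

text \<open>Tails from height \<open>h + 1\<close> that start inside an odd run, counted with \<open>u\<close>
  further upsteps: they are the tails from height \<open>h\<close> with \<open>u + 1\<close> upsteps that start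
  with an upstep.\<close>

definition odd_tail_number :: "nat \<Rightarrow> nat \<Rightarrow> nat \<Rightarrow> real" where
  "odd_tail_number h u j =
     tail_number h (Suc u) j - (if h = 0 then 0 else tail_number (h - 1) (Suc u) j)"

lemma card_tails_eq:
  "(L = h + 2 * u \<longrightarrow> real (card (tails False h L j)) = tail_number h u j) \<and>
   (L = Suc h + 2 * u \<longrightarrow> real (card (tails True (Suc h) L j)) = odd_tail_number h u j)"
proof (induction L arbitrary: h u j)
  case 0
  have "tails False 0 0 j = (if j = 0 then {[]} else {})"
    by (auto simp: tails_def)
  then show ?case
    by simp
next
  case (Suc L)
  have IH_even: "real (card (tails False h' L j')) = tail_number h' u' j'"
    if "L = h' + 2 * u'" for h' u' j'
    using Suc.IH that by blast
  have IH_odd: "real (card (tails True (Suc h') L j')) = odd_tail_number h' u' j'"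
    if "L = Suc h' + 2 * u'" for h' u' j'
    using Suc.IH that by blast
  have even_run: "real (card (tails False h (Suc L) j)) = tail_number h u j"
    if "Suc L = h + 2 * u"
  proof (cases u)
    case 0
    then have "h \<noteq> 0" "L = (h - 1) + 2 * u" "L < Suc h"
      using that by simp_all
    then show ?thesis
      using IH_even[of "h - 1" u j] card_tails_Suc[of False h L j] tails_eq_empty 0 by simp
  next
    case (Suc u')
    then have "L = Suc h + 2 * u'" "h \<noteq> 0 \<Longrightarrow> L = (h - 1) + 2 * u"
      using that by simp_all
    then show ?thesis
      using IH_odd[of h u' j] IH_even[of "h - 1" u j] card_tails_Suc[of False h L j] Suc
      by (simp add: odd_tail_number_def)
  qed
  have odd_run: "real (card (tails True (Suc h) (Suc L) j)) = odd_tail_number h u j"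
    if "Suc L = Suc h + 2 * u"
  proof -
    have "real (card (tails False (Suc (Suc h)) L j)) =
        (if u = 0 then 0 else tail_number (h + 2) (u - 1) j)"
    proof (cases u)
      case 0
      then show ?thesis
        using that tails_eq_empty by simp
    next
      case (Suc u')
      then show ?thesis
        using that IH_even[of "h + 2" u' j] by simp
    qed
    moreover have "real (card (tails False h L (j - 1))) = tail_number h u (j - 1)"
      using that IH_even[of h u "j - 1"] by simp
    ultimately show ?thesis
      using card_tails_Suc[of True "Suc h" L j] tail_number_rec
      by (simp add: odd_tail_number_def)
  qed
  show ?case
    using even_run odd_run by blast
qed

lemma tail_number_0_binomial:
  assumes "2 * k \<le> n"
  shows "tail_number 0 n (n - 2 * k) =
    real ((n + 1) choose (2 * k + 1)) * real ((n + k) choose k) / real (n + 1)"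
proof -
  have cancel: "e * f / (a * b) * (c / (d * f)) / e = c / (b * d * a)"
    if "e \<noteq> 0" "f \<noteq> 0" for a b c d e f :: real
    using that by (simp add: field_simps)
  have "n + 1 - (2 * k + 1) = n - 2 * k" "n + k - k = n"
    "fact (n + 1) = real (n + 1) * (fact n :: real)"
    using assms by simp_all
  then have "real ((n + 1) choose (2 * k + 1)) * real ((n + k) choose k) / real (n + 1) =
      real (n + 1) * fact n / (fact (2 * k + 1) * fact (n - 2 * k)) *
      (fact (n + k) / (fact k * fact n)) / real (n + 1)"
    using assms by (simp only: binomial_fact add_le_mono1 le_add2)
  also have "\<dots> = fact (n + k) / (fact (n - 2 * k) * fact k * fact (2 * k + 1))"
    by (rule cancel) simp_all
  also have "\<dots> = tail_number 0 n (n - 2 * k)"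
  proof -
    have "n - 2 * k + 3 * k = n + k" "(n - (n - 2 * k)) div 2 = k"
      using assms by simp_all
    then show ?thesis
      using assms by (simp add: tail_number_def tail_weight_def add.commute del: fact_Suc)
  qed
  finally show ?thesis ..
qed

theorem mainTheorem8:
  fixes n k :: nat
  assumes "n \<ge> 1"
  shows "real (card {w. dyck_path n w \<and> int (odd_ascents w) = int n - 2 * int k})
         = real ((n + 1) choose (2 * k + 1)) * real ((n + k) choose k) / real (n + 1)"
proof (cases "2 * k \<le> n")
  case True
  then have "{w. dyck_path n w \<and> int (odd_ascents w) = int n - 2 * int k} =
      tails False 0 (2 * n) (n - 2 * k)"
    by (auto simp: tails_def dyck_path_iff_dyck_tail odd_ascents_eq_odd_ascents_from)
  then show ?thesis
    using card_tails_eq[of "2 * n" 0 n "n - 2 * k"] tail_number_0_binomial[OF True] by simp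
next
  case False
  then have "{w. dyck_path n w \<and> int (odd_ascents w) = int n - 2 * int k} = {}"
    by auto
  moreover have "(n + 1) choose (2 * k + 1) = 0"
    by (rule binomial_eq_0) (use False in simp)
  ultimately show ?thesis
    by (simp del: binomial_Suc_Suc)
qed

end
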